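(* Let $L=\sum_{k=1}^m P_{n_k}$ be a linear forest and $n$ a positive integer. If $L\in\operatorname{obs}(P_n)$, then: (1) $m_1\le 1$; (2) $n_k\in\{1,2,4,6\}$ for all $k\in\{1,\dots,m\}$; (3) if $n_k\in\{4,6\}$ for some $k$, then $m_1=1$.
   Context: All graphs are finite, simple and loopless. $P_n$ denotes the path on $n$ vertices ($P_1=K_1$, $P_2=K_2$). A linear forest is a disjoint union of paths; $\sum_{k=1}^m P_{n_k}$ denotes the linear forest whose $k$-th component is the path on $n_k$ vertices, and $m_i$ denotes the number of indices $k$ with $n_k=i$. A full-homomorphism $\varphi\colon G\to H$ is a map $V(G)\to V(H)$ such that for all $x,y\in V(G)$, $xy\in E(G)$ if and only if $\varphi(x)\varphi(y)\in E(H)$. A full $H$-colouring of $G$ is a full-homomorphism $G\to H$. A minimal $H$-obstruction is a graph $G$ that admits no full $H$-colouring while every proper induced subgraph of $G$ admits one; $\operatorname{obs}(H)$ denotes the set of minimal $H$-obstructions (up to isomorphism). *)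

theory Defs
  imports Main
begin

text \<open>A graph is a pair (V, E) of a vertex set and an adjacency relation
  (symmetric, irreflexive for all graphs considered here).\<close>
type_synonym 'a graph = "'a set \<times> ('a \<Rightarrow> 'a \<Rightarrow> bool)"

definition verts :: "'a graph \<Rightarrow> 'a set" where "verts G = fst G"
definition adj :: "'a graph \<Rightarrow> 'a \<Rightarrow> 'a \<Rightarrow> bool" where "adj G = snd G"

definition full_hom :: "'a graph \<Rightarrow> 'b graph \<Rightarrow> ('a \<Rightarrow> 'b) \<Rightarrow> bool" where
  "full_hom G H f \<longleftrightarrow> (\<forall>x\<in>verts G. f x \<in> verts H) \<and>
     (\<forall>x\<in>verts G. \<forall>y\<in>verts G. adj G x y \<longleftrightarrow> adj H (f x) (f y))"

definition full_colourable :: "'a graph \<Rightarrow> 'b graph \<Rightarrow> bool" where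
  "full_colourable G H \<longleftrightarrow> (\<exists>f. full_hom G H f)"

definition induced :: "'a graph \<Rightarrow> 'a set \<Rightarrow> 'a graph" where
  "induced G S = (S \<inter> verts G, \<lambda>x y. x \<in> S \<and> y \<in> S \<and> adj G x y)"

definition min_obs :: "'a graph \<Rightarrow> 'b graph \<Rightarrow> bool" where
  "min_obs G H \<longleftrightarrow> \<not> full_colourable G H \<and>
     (\<forall>S. S \<subset> verts G \<longrightarrow> full_colourable (induced G S) H)"

definition path_graph :: "nat \<Rightarrow> nat graph" where
  "path_graph n = ({..<n}, \<lambda>i j. i < n \<and> j < n \<and> (i + 1 = j \<or> j + 1 = i))"

text \<open>The linear forest P_{n_1} + ... + P_{n_m} given by the list [n_1,...,n_m]
  (0-indexed): vertex (k,i) is the i-th vertex of the k-th path.\<close>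
definition linear_forest :: "nat list \<Rightarrow> (nat \<times> nat) graph" where
  "linear_forest ns = ({(k, i). k < length ns \<and> i < ns ! k},
     \<lambda>(k, i) (l, j). k < length ns \<and> l = k \<and> i < ns ! k \<and> j < ns ! k \<and> (i + 1 = j \<or> j + 1 = i))"

definition mult :: "nat list \<Rightarrow> nat \<Rightarrow> nat" where
  "mult ns i = card {k. k < length ns \<and> ns ! k = i}"

end

theory Submission
  imports Defs
begin

text \<open>
  A linear forest has a full \<open>P\<^sub>n\<close>-colouring iff its weight is at most \<open>n + 1\<close>: a component
  \<open>P\<^sub>j\<close> with \<open>j \<ge> 4\<close> must be embedded injectively, \<open>P\<^sub>2\<close> and \<open>P\<^sub>3\<close> fold onto two adjacent
  colours, all isolated vertices can share one colour, and the colour sets of distinct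
  components must be separated by a gap. In a minimal obstruction every vertex-deleted
  subforest is colourable, so deleting any vertex must strictly lower the weight. Deleting a
  second isolated vertex, the third vertex of a \<open>P\<^sub>j\<close> with \<open>j \<notin> {1, 2, 4, 6}\<close>, or the
  second vertex of a \<open>P\<^sub>4\<close> or \<open>P\<^sub>6\<close> in a forest without isolated vertices does not.
\<close>

lemma verts_linear_forest:
  "verts (linear_forest ns) = {(k, i). k < length ns \<and> i < ns ! k}"
  by (simp add: linear_forest_def verts_def)

lemma adj_linear_forest:
  "adj (linear_forest ns) (k, i) (l, j) \<longleftrightarrow>
     k < length ns \<and> l = k \<and> i < ns ! k \<and> j < ns ! k \<and> (i + 1 = j \<or> j + 1 = i)"
  by (simp add: linear_forest_def adj_def)

lemma verts_path_graph: "verts (path_graph n) = {..<n}"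
  by (simp add: path_graph_def verts_def)

lemma adj_path_graph: "adj (path_graph n) i j \<longleftrightarrow> i < n \<and> j < n \<and> (i + 1 = j \<or> j + 1 = i)"
  by (simp add: path_graph_def adj_def)

lemma verts_induced: "verts (induced G S) = S \<inter> verts G"
  by (simp add: induced_def verts_def)

lemma adj_induced: "adj (induced G S) x y \<longleftrightarrow> x \<in> S \<and> y \<in> S \<and> adj G x y"
  by (simp add: induced_def adj_def)

lemma full_hom_comp:
  assumes "full_hom G H f"
    and "\<forall>x\<in>verts G'. \<phi> x \<in> verts G"
    and "\<forall>x\<in>verts G'. \<forall>y\<in>verts G'. adj G' x y \<longleftrightarrow> adj G (\<phi> x) (\<phi> y)"
  shows "full_hom G' H (f \<circ> \<phi>)"
  using assms unfolding full_hom_def by auto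

lemma full_hom_path_graphD:
  assumes "full_hom G (path_graph n) f" and "u \<in> verts G" and "w \<in> verts G"
  shows "f u < n" and "adj G u w \<longleftrightarrow> f u + 1 = f w \<or> f w + 1 = f u"
  using assms by (auto simp: full_hom_def verts_path_graph adj_path_graph)

text \<open>If \<open>s > n\<close> the hypothesis forces \<open>m = 0\<close>, so \<open>G\<close> has no vertices.\<close>

lemma full_hom_path_graph_shift:
  assumes "full_hom G (path_graph m) f" and "m \<le> n - s"
  shows "full_hom G (path_graph n) (\<lambda>u. f u + s)"
  using assms by (fastforce simp: full_hom_def verts_path_graph adj_path_graph)

lemma full_hom_path_graph_separated:
  assumes f: "full_hom G (path_graph n) f"
    and V: "u \<in> verts G" "w \<in> verts G" "u' \<in> verts G"
    and "\<not> adj G u w" "adj G u u'" "\<not> adj G w u'"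
  shows "f u \<noteq> f w \<and> f u + 1 \<noteq> f w \<and> f w + 1 \<noteq> f u"
  using assms full_hom_path_graphD(2)[OF f] by metis

lemma full_hom_path_graph_inj_on:
  assumes f: "full_hom (path_graph N) (path_graph n) f" and N: "4 \<le> N"
  shows "inj_on f {..<N}"
proof -
  define a where "a i = int (f i)" for i
  have a: "\<bar>a i - a j\<bar> = 1 \<longleftrightarrow> i + 1 = j \<or> j + 1 = i" if "i < N" "j < N" for i j
    using full_hom_path_graphD(2)[OF f, of i j] that
    by (auto simp: a_def verts_path_graph adj_path_graph)
  \<comment> \<open>The map never turns back: \<open>a (i + 2) = a i\<close> would make the neighbour \<open>i + 3\<close>
    (or \<open>i - 1\<close>) of one end adjacent to the other end.\<close>
  have step: "a (i + 2) - a (i + 1) = a (i + 1) - a i" if "i + 2 < N" for i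
  proof (rule ccontr)
    assume "a (i + 2) - a (i + 1) \<noteq> a (i + 1) - a i"
    moreover have "\<bar>a (i + 2) - a (i + 1)\<bar> = 1" "\<bar>a (i + 1) - a i\<bar> = 1"
      using a that by auto
    ultimately have returns: "a (i + 2) = a i" by arith
    show False
    proof (cases i)
      case 0
      have "\<bar>a 3 - a 2\<bar> = 1" "\<bar>a 3 - a 0\<bar> \<noteq> 1" using a N by auto
      with returns 0 show False by (simp add: numeral_2_eq_2)
    next
      case (Suc p)
      have "\<bar>a p - a (p + 1)\<bar> = 1" "\<bar>a p - a (p + 3)\<bar> \<noteq> 1" using a that Suc by auto
      with returns Suc show False by (simp add: numeral_3_eq_3)
    qed
  qed
  define d where "d = a 1 - a 0"
  have "\<bar>d\<bar> = 1" using a[of 1 0] N by (simp add: d_def)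
  have "i + 1 < N \<longrightarrow> a (i + 1) - a i = d" for i
    by (induction i) (use step in \<open>auto simp: d_def numeral_2_eq_2\<close>)
  then have linear: "i < N \<longrightarrow> a i = a 0 + int i * d" for i
    by (induction i) (auto simp: algebra_simps)
  show ?thesis
  proof (rule inj_onI)
    fix i j assume "i \<in> {..<N}" "j \<in> {..<N}" "f i = f j"
    then have "int i * d = int j * d" using linear[of i] linear[of j] by (simp add: a_def)
    then show "i = j" using \<open>\<bar>d\<bar> = 1\<close> by auto
  qed
qed

lemma full_hom_linear_forest_separated:
  assumes f: "full_hom (linear_forest ns) (path_graph n) f"
    and V: "u \<in> verts (linear_forest ns)" "w \<in> verts (linear_forest ns)"
    and other: "fst u \<noteq> fst w" and long: "2 \<le> ns ! fst u"
  shows "f u \<noteq> f w \<and> f u + 1 \<noteq> f w \<and> f w + 1 \<noteq> f u"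
proof -
  obtain k i where u: "u = (k, i)" by (cases u)
  define u' where "u' = (if i = 0 then (k, 1) else (k, i - 1))"
  have "u' \<in> verts (linear_forest ns)" "adj (linear_forest ns) u u'"
    using V(1) long by (auto simp: u u'_def verts_linear_forest adj_linear_forest)
  moreover have "\<not> adj (linear_forest ns) u w" "\<not> adj (linear_forest ns) w u'"
    using other by (cases w; auto simp: u u'_def adj_linear_forest)+
  ultimately show ?thesis
    using full_hom_path_graph_separated[OF f V] by blast
qed

lemma full_hom_linear_forest_Cons:
  assumes g: "full_hom (path_graph x) H g"
    and f: "full_hom (linear_forest ns) H f"
    and apart: "\<forall>i<x. \<forall>u\<in>verts (linear_forest ns). \<not> adj H (g i) (f u) \<and> \<not> adj H (f u) (g i)"
  shows "full_hom (linear_forest (x # ns)) H (\<lambda>(k, i). if k = 0 then g i else f (k - 1, i))"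
proof -
  let ?h = "\<lambda>(k, i). if k = 0 then g i else f (k - 1, i)"
  have V: "(k, i) \<in> verts (linear_forest (x # ns)) \<longleftrightarrow>
      (k = 0 \<and> i \<in> verts (path_graph x)) \<or> (k > 0 \<and> (k - 1, i) \<in> verts (linear_forest ns))" for k i
    by (cases k) (auto simp: verts_linear_forest verts_path_graph)
  have A: "adj (linear_forest (x # ns)) (k, i) (l, j) \<longleftrightarrow>
      (k = 0 \<and> l = 0 \<and> adj (path_graph x) i j) \<or>
      (k > 0 \<and> l > 0 \<and> adj (linear_forest ns) (k - 1, i) (l - 1, j))" for k i l j
    by (cases k; cases l) (auto simp: adj_linear_forest adj_path_graph)
  show ?thesis
    unfolding full_hom_def
  proof (intro conjI ballI)
    fix u assume "u \<in> verts (linear_forest (x # ns))"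
    then show "?h u \<in> verts H"
      using g f by (cases u) (auto simp: V full_hom_def)
  next
    fix u v assume "u \<in> verts (linear_forest (x # ns))" "v \<in> verts (linear_forest (x # ns))"
    then show "adj (linear_forest (x # ns)) u v \<longleftrightarrow> adj H (?h u) (?h v)"
      using g f apart by (cases u; cases v) (auto simp: V A full_hom_def verts_path_graph)
  qed
qed

lemma full_hom_linear_forest_Cons_singleton:
  assumes f: "full_hom (linear_forest ns) H f" and k: "k < length ns" "ns ! k = 1"
  shows "full_hom (linear_forest (1 # ns)) H (f \<circ> (\<lambda>(l, i). if l = 0 then (k, 0) else (l - 1, i)))"
  using k by (intro full_hom_comp[OF f])
    (auto simp: verts_linear_forest adj_linear_forest nth_Cons' split: if_splits)

lemma full_colourable_delete_vertex:
  assumes "full_colourable (induced (linear_forest ns) (verts (linear_forest ns) - {(k, d)})) H"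
    and k: "k < length ns" "d < ns ! k"
  shows "full_colourable (linear_forest (ns[k := d] @ [ns ! k - d - 1])) H"
proof -
  obtain f where f: "full_hom (induced (linear_forest ns) (verts (linear_forest ns) - {(k, d)})) H f"
    using assms(1) by (auto simp: full_colourable_def)
  let ?\<phi> = "\<lambda>(l, i). if l = length ns then (k, i + d + 1) else (l, i)"
  have "full_hom (linear_forest (ns[k := d] @ [ns ! k - d - 1])) H (f \<circ> ?\<phi>)"
    using k by (intro full_hom_comp[OF f])
      (auto simp: verts_induced adj_induced verts_linear_forest adj_linear_forest nth_append nth_list_update
        split: if_splits)
  then show ?thesis by (auto simp: full_colourable_def)
qed

text \<open>A component costs the colours it needs plus one gap colour after it. All isolated
  vertices together cost one colour and one gap, added once in the forest weight.\<close>

definition component_weight :: "nat \<Rightarrow> nat" where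
  "component_weight j = (if j \<le> 1 then 0 else if j = 3 then 3 else j + 1)"

definition forest_weight :: "nat list \<Rightarrow> nat" where
  "forest_weight ns = sum_list (map component_weight ns) + (if 1 \<in> set ns then 2 else 0)"

lemma card_Un_image_Suc_ge:
  assumes "finite A" and "A \<noteq> {}"
  shows "card A + 1 \<le> card (A \<union> Suc ` A)"
proof -
  have "Min A \<notin> Suc ` A" using Min_le[OF assms(1)] by fastforce
  then have "card A + 1 = card (insert (Min A) (Suc ` A))"
    using assms(1) by (simp add: card_image)
  also have "\<dots> \<le> card (A \<union> Suc ` A)"
    using assms by (intro card_mono) (auto simp: Min_in)
  finally show ?thesis .
qed

lemma sum_card_separated_subsets_le:
  fixes A :: "'i \<Rightarrow> nat set"
  assumes "finite I" and sub: "\<forall>i\<in>I. A i \<subseteq> {..<n}"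
    and sep: "\<forall>i\<in>I. \<forall>j\<in>I. i \<noteq> j \<longrightarrow> (\<forall>a\<in>A i. \<forall>b\<in>A j. a \<noteq> b \<and> a + 1 \<noteq> b)"
  shows "(\<Sum>i\<in>I. if A i = {} then 0 else card (A i) + 1) \<le> n + 1"
proof -
  \<comment> \<open>\<open>A i\<close> together with its gap: these sets are pairwise disjoint in \<open>{..n}\<close>.\<close>
  define E where "E i = A i \<union> Suc ` A i" for i
  have E_sub: "E i \<subseteq> {..<n + 1}" if "i \<in> I" for i
    using sub that by (fastforce simp: E_def)
  have fin: "finite (E i)" if "i \<in> I" for i
    using finite_subset[OF E_sub[OF that]] by simp
  have "(\<Sum>i\<in>I. if A i = {} then 0 else card (A i) + 1) \<le> (\<Sum>i\<in>I. card (E i))"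
  proof (rule sum_mono)
    fix i assume "i \<in> I"
    then show "(if A i = {} then 0 else card (A i) + 1) \<le> card (E i)"
      using card_Un_image_Suc_ge[of "A i"] fin[of i] by (auto simp: E_def)
  qed
  also have "\<dots> = card (\<Union>i\<in>I. E i)"
  proof (intro card_UN_disjoint[symmetric] assms(1) ballI impI fin)
    fix i j assume "i \<in> I" "j \<in> I" "i \<noteq> j"
    then have "a \<noteq> b" "Suc a \<noteq> b" "Suc b \<noteq> a" if "a \<in> A i" "b \<in> A j" for a b
      using sep that by auto
    then show "E i \<inter> E j = {}" unfolding E_def by (auto; metis)
  qed
  also have "\<dots> \<le> n + 1"
    using card_mono[of "{..<n + 1}" "\<Union>i\<in>I. E i"] E_sub by auto
  finally show ?thesis .
qed

lemma component_weight_le_card_image: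
  assumes f: "full_hom (linear_forest ns) (path_graph n) f"
    and k: "k < length ns" "2 \<le> ns ! k"
  shows "component_weight (ns ! k) \<le> card (f ` {u \<in> verts (linear_forest ns). fst u = k}) + 1"
proof -
  have g: "full_hom (path_graph (ns ! k)) (path_graph n) (f \<circ> Pair k)"
    using k by (intro full_hom_comp[OF f])
      (auto simp: verts_linear_forest adj_linear_forest verts_path_graph adj_path_graph)
  have "{u \<in> verts (linear_forest ns). fst u = k} = Pair k ` {..<ns ! k}"
    using k by (auto simp: verts_linear_forest)
  then have image: "f ` {u \<in> verts (linear_forest ns). fst u = k} = (f \<circ> Pair k) ` {..<ns ! k}"
    by (simp add: image_comp)
  show ?thesis
  proof (cases "4 \<le> ns ! k")
    case True
    then show ?thesis
      unfolding image card_image[OF full_hom_path_graph_inj_on[OF g True]]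
      by (simp add: component_weight_def)
  next
    case False
    have "f (k, 0) \<noteq> f (k, 1)"
      using full_hom_path_graphD(2)[OF g, of 0 1] k by (auto simp: verts_path_graph adj_path_graph)
    then have "card {f (k, 0), f (k, 1)} \<le> card ((f \<circ> Pair k) ` {..<ns ! k})"
      using k by (intro card_mono) auto
    moreover have "component_weight (ns ! k) \<le> 3"
      using False by (simp add: component_weight_def)
    ultimately show ?thesis
      using \<open>f (k, 0) \<noteq> f (k, 1)\<close> by (simp add: image)
  qed
qed

lemma forest_weight_le_if_full_hom:
  assumes f: "full_hom (linear_forest ns) (path_graph n) f"
  shows "forest_weight ns \<le> n + 1"
proof -
  let ?V = "verts (linear_forest ns)"
  define B where "B k = (if k < length ns then {u \<in> ?V. fst u = k \<and> 2 \<le> ns ! k}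
    else {u \<in> ?V. ns ! fst u = 1})" for k
  define w where "w k = (if f ` B k = {} then 0 else card (f ` B k) + 1)" for k
  have packed: "(\<Sum>k\<le>length ns. w k) \<le> n + 1"
    unfolding w_def
  proof (rule sum_card_separated_subsets_le)
    show "\<forall>k\<in>{..length ns}. f ` B k \<subseteq> {..<n}"
      using full_hom_path_graphD(1)[OF f] by (auto simp: B_def)
    show "\<forall>k\<in>{..length ns}. \<forall>l\<in>{..length ns}. k \<noteq> l \<longrightarrow>
      (\<forall>a\<in>f ` B k. \<forall>b\<in>f ` B l. a \<noteq> b \<and> a + 1 \<noteq> b)"
    proof (intro ballI impI)
      fix k l a b
      assume "k \<in> {..length ns}" "l \<in> {..length ns}" "k \<noteq> l" "a \<in> f ` B k" "b \<in> f ` B l"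
      then obtain u v where "a = f u" "b = f v" "u \<in> B k" "v \<in> B l" by blast
      moreover from this have "u \<in> ?V" "v \<in> ?V" "fst u \<noteq> fst v" "2 \<le> ns ! fst u \<or> 2 \<le> ns ! fst v"
        using \<open>k \<noteq> l\<close> \<open>k \<in> {..length ns}\<close> \<open>l \<in> {..length ns}\<close>
        by (auto simp: B_def split: if_splits)
      ultimately show "a \<noteq> b \<and> a + 1 \<noteq> b"
        using full_hom_linear_forest_separated[OF f] by metis
    qed
  qed simp
  have components: "component_weight (ns ! k) \<le> w k" if k: "k < length ns" for k
  proof (cases "2 \<le> ns ! k")
    case True
    then have "B k = {u \<in> ?V. fst u = k}" and "(k, 0) \<in> B k"
      using k by (auto simp: B_def verts_linear_forest)
    then show ?thesis
      using component_weight_le_card_image[OF f k True] by (auto simp: w_def)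
  qed (simp add: component_weight_def)
  have singletons: "(if 1 \<in> set ns then 2 else 0) \<le> w (length ns)"
  proof -
    have "finite (f ` B (length ns))"
      by (rule finite_subset[of _ "{..<n}"]) (use full_hom_path_graphD(1)[OF f] in \<open>auto simp: B_def\<close>)
    moreover have "1 \<in> set ns \<Longrightarrow> B (length ns) \<noteq> {}"
      by (auto simp: B_def verts_linear_forest in_set_conv_nth)
    ultimately show ?thesis by (auto simp: w_def card_gt_0_iff Suc_le_eq)
  qed
  have "forest_weight ns = (\<Sum>k<length ns. component_weight (ns ! k)) + (if 1 \<in> set ns then 2 else 0)"
    by (simp add: forest_weight_def sum_list_sum_nth atLeast0LessThan)
  also have "\<dots> \<le> (\<Sum>k<length ns. w k) + w (length ns)"
    using components singletons by (intro add_mono sum_mono) auto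
  also have "\<dots> = (\<Sum>k\<le>length ns. w k)"
    by (simp add: lessThan_Suc_atMost[symmetric])
  finally show ?thesis using packed by linarith
qed

lemma full_colourable_if_forest_weight_le:
  "forest_weight ns \<le> n + 1 \<Longrightarrow> full_colourable (linear_forest ns) (path_graph n)"
proof (induction ns arbitrary: n)
  case Nil
  then show ?case by (auto simp: full_colourable_def full_hom_def verts_linear_forest)
next
  case (Cons x ns)
  show ?case
  proof (cases "x = 1 \<and> 1 \<in> set ns")
    case True
    then obtain k where "k < length ns" "ns ! k = 1" by (auto simp: in_set_conv_nth)
    moreover have "forest_weight ns \<le> n + 1"
      using Cons.prems True by (simp add: forest_weight_def component_weight_def)
    then obtain f where "full_hom (linear_forest ns) (path_graph n) f"
      using Cons.IH by (auto simp: full_colourable_def)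
    ultimately show ?thesis
      unfolding full_colourable_def using True by (blast intro: full_hom_linear_forest_Cons_singleton)
  next
    case False
    define s where "s = (if x = 1 then 2 else component_weight x)"
    have weight: "forest_weight (x # ns) = s + forest_weight ns"
      using False by (auto simp: s_def forest_weight_def component_weight_def)
    then have "forest_weight ns \<le> (n - s) + 1" using Cons.prems by linarith
    then obtain f where f: "full_hom (linear_forest ns) (path_graph (n - s)) f"
      using Cons.IH by (auto simp: full_colourable_def)
    define g where "g i = (if x = 3 then i mod 2 else i)" for i :: nat
    have room: "g i + 2 \<le> s" if "i < x" for i
      using that by (auto simp: g_def s_def component_weight_def)
    have "s \<le> n + 1" using weight Cons.prems by simp
    have "full_hom (path_graph x) (path_graph n) g"
      unfolding full_hom_def
    proof (intro conjI ballI)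
      fix i j assume "i \<in> verts (path_graph x)" "j \<in> verts (path_graph x)"
      moreover have "g i < n" "g j < n"
        using calculation room \<open>s \<le> n + 1\<close> by (fastforce simp: verts_path_graph)+
      moreover have "x = 3 \<Longrightarrow> i \<in> {0, 1, 2} \<and> j \<in> {0, 1, 2}"
        using calculation by (auto simp: verts_path_graph)
      ultimately show "adj (path_graph x) i j \<longleftrightarrow> adj (path_graph n) (g i) (g j)"
        by (cases "x = 3") (auto simp: verts_path_graph adj_path_graph g_def)
    qed (use room \<open>s \<le> n + 1\<close> in \<open>fastforce simp: verts_path_graph\<close>)
    moreover have "full_hom (linear_forest ns) (path_graph n) (\<lambda>u. f u + s)"
      by (rule full_hom_path_graph_shift[OF f]) simp
    ultimately show ?thesis
      using room unfolding full_colourable_def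
      by (fastforce intro: full_hom_linear_forest_Cons simp: adj_path_graph)
  qed
qed

lemma full_colourable_linear_forest_path_graph_iff:
  "full_colourable (linear_forest ns) (path_graph n) \<longleftrightarrow> forest_weight ns \<le> n + 1"
  using full_colourable_if_forest_weight_le forest_weight_le_if_full_hom
  unfolding full_colourable_def by blast

lemma min_obs_forest_weight_delete_vertex:
  assumes mo: "min_obs (linear_forest ns) (path_graph n)" and k: "k < length ns" "d < ns ! k"
  shows "forest_weight (ns[k := d] @ [ns ! k - d - 1]) < forest_weight ns"
proof -
  have "verts (linear_forest ns) - {(k, d)} \<subset> verts (linear_forest ns)"
    using k by (auto simp: verts_linear_forest)
  then have "full_colourable (linear_forest (ns[k := d] @ [ns ! k - d - 1])) (path_graph n)"
    using mo k by (intro full_colourable_delete_vertex) (auto simp: min_obs_def)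
  moreover have "\<not> full_colourable (linear_forest ns) (path_graph n)"
    using mo by (simp add: min_obs_def)
  ultimately show ?thesis
    by (simp add: full_colourable_linear_forest_path_graph_iff)
qed

lemma sum_component_weight_delete_vertex:
  "k < length ns \<Longrightarrow> sum_list (map component_weight (ns[k := d] @ [r])) + component_weight (ns ! k)
     = sum_list (map component_weight ns) + component_weight d + component_weight r"
  by (induction ns arbitrary: k) (auto split: nat.splits)

lemma in_set_list_update_if_neq: "y \<in> set xs \<Longrightarrow> xs ! k \<noteq> y \<Longrightarrow> y \<in> set (xs[k := z])"
  by (metis in_set_conv_nth length_list_update nth_list_update_neq)

lemma min_obs_mult_one_le:
  assumes mo: "min_obs (linear_forest ns) (path_graph n)"
  shows "mult ns 1 \<le> 1"
proof (rule ccontr)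
  assume "\<not> mult ns 1 \<le> 1"
  then have "\<not> card {k. k < length ns \<and> ns ! k = 1} \<le> Suc 0" by (simp add: mult_def)
  then obtain k k' where k: "k < length ns" "ns ! k = 1" and k': "k' < length ns" "ns ! k' = 1" "k' \<noteq> k"
    by (subst (asm) card_le_Suc0_iff_eq) auto
  have "1 \<in> set (ns[k := 0])"
    using k' by (metis length_list_update nth_list_update_neq nth_mem)
  then have "forest_weight ns \<le> forest_weight (ns[k := 0] @ [ns ! k - 0 - 1])"
    using sum_component_weight_delete_vertex[OF k(1), of 0 0] k
    by (simp add: forest_weight_def component_weight_def)
  then show False using min_obs_forest_weight_delete_vertex[OF mo k(1), of 0] k by simp
qed

lemma min_obs_component_sizes:
  assumes mo: "min_obs (linear_forest ns) (path_graph n)" and k: "k < length ns" "1 \<le> ns ! k"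
  shows "ns ! k \<in> {1, 2, 4, 6}"
proof (rule ccontr)
  assume bad: "ns ! k \<notin> {1, 2, 4, 6}"
  with k have "2 < ns ! k" by auto
  have "component_weight (ns ! k) \<le> component_weight 2 + component_weight (ns ! k - 2 - 1)"
    using bad \<open>2 < ns ! k\<close> by (auto simp: component_weight_def)
  moreover have "1 \<in> set ns \<Longrightarrow> 1 \<in> set (ns[k := 2] @ [ns ! k - 2 - 1])"
    using bad in_set_list_update_if_neq[of 1 ns k 2] by auto
  ultimately have "forest_weight ns \<le> forest_weight (ns[k := 2] @ [ns ! k - 2 - 1])"
    using sum_component_weight_delete_vertex[OF k(1), of 2 "ns ! k - 2 - 1"]
    by (auto simp: forest_weight_def)
  then show False
    using min_obs_forest_weight_delete_vertex[OF mo k(1) \<open>2 < ns ! k\<close>] by simp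
qed

lemma min_obs_has_singleton:
  assumes mo: "min_obs (linear_forest ns) (path_graph n)" and k: "k < length ns" "ns ! k \<in> {4, 6}"
  shows "1 \<in> set ns"
proof (rule ccontr)
  assume "1 \<notin> set ns"
  moreover have "component_weight (ns ! k) = component_weight 1 + component_weight (ns ! k - 1 - 1) + 2"
    using k(2) by (auto simp: component_weight_def)
  moreover have "1 \<in> set (ns[k := 1] @ [ns ! k - 1 - 1])"
    using set_update_memI[OF k(1)] by simp
  ultimately have "forest_weight ns \<le> forest_weight (ns[k := 1] @ [ns ! k - 1 - 1])"
    using sum_component_weight_delete_vertex[OF k(1), of 1 "ns ! k - 1 - 1"]
    by (simp add: forest_weight_def)
  moreover have "1 < ns ! k" using k(2) by auto
  ultimately show False
    using min_obs_forest_weight_delete_vertex[OF mo k(1)] by fastforce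
qed

theorem lemma2p4:
  fixes ns :: "nat list" and n :: nat
  assumes "\<forall>k < length ns. ns ! k \<ge> 1"
    and "n \<ge> 1"
    and "min_obs (linear_forest ns) (path_graph n)"
  shows "mult ns 1 \<le> 1
    \<and> (\<forall>k < length ns. ns ! k \<in> {1, 2, 4, 6})
    \<and> ((\<exists>k < length ns. ns ! k \<in> {4, 6}) \<longrightarrow> mult ns 1 = 1)"
proof -
  have "1 \<le> mult ns 1" if "1 \<in> set ns"
    using that by (auto simp: mult_def in_set_conv_nth Suc_le_eq card_gt_0_iff)
  then show ?thesis
    using assms min_obs_mult_one_le min_obs_component_sizes min_obs_has_singleton
    by (meson le_antisym)
qed

end
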